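(* Let $q>0$, $\ell\in\{0,1,2,\ldots\}$ and $n\in\{1,2,3,\ldots\}$. Then $$\tilde\gamma_\ell^{(n)}(q)=(-1)^\ell\sum_{k=0}^{\ell}(-1)^k k!\binom{\ell}{k}s(n+1,k+1)\,\zeta_E^{(\ell-k)}(n+1,q),$$ where $\tilde\gamma_\ell^{(n)}$ denotes the $n$-th derivative of $\tilde\gamma_\ell$ with respect to $q$.
   Context: For $q>0$, $\zeta_E(z,q)=\sum_{n=0}^\infty (-1)^n (n+q)^{-z}$ for $\mathrm{Re}(z)>0$, extended by analytic continuation to an entire function of $z$; $\zeta_E^{(m)}(z,q)$ denotes $\frac{\partial^m}{\partial z^m}\zeta_E(z,q)$. The modified Stieltjes constants $\tilde\gamma_k(q)$ are defined by the Taylor expansion $\zeta_E(z,q)=\sum_{k=0}^\infty\frac{(-1)^k\tilde\gamma_k(q)}{k!}(z-1)^k$. $s(n,k)$ are the (signed) Stirling numbers of the first kind: $x(x-1)\cdots(x-n+1)=\sum_{k=0}^n s(n,k)x^k$. *)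

theory Defs
  imports "HOL-Complex_Analysis.Complex_Analysis" "HOL-Combinatorics.Stirling"
begin

definition zetaE :: "complex \<Rightarrow> real \<Rightarrow> complex" where
  "zetaE z q = (THE f. f holomorphic_on UNIV \<and>
      (\<forall>w. 0 < Re w \<longrightarrow>
         (\<lambda>n. (-1) ^ n / (of_nat n + of_real q) powr w) sums f w)) z"

definition zetaE_deriv :: "nat \<Rightarrow> complex \<Rightarrow> real \<Rightarrow> complex" where
  "zetaE_deriv m z q = (deriv ^^ m) (\<lambda>w. zetaE w q) z"

definition mod_stieltjes :: "nat \<Rightarrow> real \<Rightarrow> complex" where
  "mod_stieltjes k q = (THE c. \<forall>z.
      (\<lambda>j. (-1) ^ j * c j / fact j * (z - 1) ^ j) sums zetaE z q) k"

definition stirling1_signed :: "nat \<Rightarrow> nat \<Rightarrow> int" where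
  "stirling1_signed n k = (-1) ^ (n + k) * int (stirling n k)"

definition higher_vderiv :: "nat \<Rightarrow> (real \<Rightarrow> complex) \<Rightarrow> real \<Rightarrow> complex" where
  "higher_vderiv n f = ((\<lambda>g x. vector_derivative g (at x)) ^^ n) f"

end

theory Submission
  imports Defs
begin

text \<open>A step of Euler's transformation,
  sum_n (-1)^n b_n = b_0/2 + 1/2 sum_n (-1)^n (b_n - b_(n+1)), replaces the terms by their
  differences; after K steps they are K-th differences of x^(-w), which are O(n^(-Re w - K))
  locally uniformly in w. The transformed series therefore continues zeta_E to an entire function
  of w, jointly continuous in (w,q), and termwise differentiation gives
  d/dq zeta_E(w,q) = -w zeta_E(w+1,q). By Cauchy's formula the w-derivatives are integrals over
  a circle, so they commute with d/dq. As the Taylor coefficients give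
  gamma_l(q) = (-1)^l (d/dw)^l zeta_E(1,q), differentiating n times in q yields
  (-1)^l (d/dw)^l [(-1)^n (w)_n zeta_E(w+n,q)] at w = 1, and the Leibniz rule together with the
  expansion of the rising factorial (w)_n around w = 1 in Stirling numbers of the first kind
  gives the formula.\<close>

lemma has_vector_derivative_suminf:
  fixes f f' :: "nat \<Rightarrow> real \<Rightarrow> 'a::banach"
  assumes S: "open S" "convex S"
    and f': "\<And>n x. x \<in> S \<Longrightarrow> (f n has_vector_derivative f' n x) (at x)"
    and unif: "uniform_limit S (\<lambda>N x. \<Sum>n<N. f' n x) g' sequentially"
    and summable: "\<And>x. x \<in> S \<Longrightarrow> summable (\<lambda>n. f n x)"
    and x: "x \<in> S"
  shows "((\<lambda>x. \<Sum>n. f n x) has_vector_derivative g' x) (at x)"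
proof -
  have unif': "\<forall>\<^sub>F N in sequentially. \<forall>y\<in>S. \<forall>h. norm ((\<Sum>n<N. h *\<^sub>R f' n y) - h *\<^sub>R g' y) \<le> e * norm h"
    if "e > 0" for e
    using uniform_limitD[OF unif that]
  proof eventually_elim
    case (elim N)
    show ?case
    proof (intro ballI allI)
      fix y h assume "y \<in> S"
      then have "norm ((\<Sum>n<N. f' n y) - g' y) \<le> e"
        using elim by (simp add: dist_norm less_imp_le)
      then have "\<bar>h\<bar> * norm ((\<Sum>n<N. f' n y) - g' y) \<le> \<bar>h\<bar> * e"
        by (simp add: mult_left_mono)
      then show "norm ((\<Sum>n<N. h *\<^sub>R f' n y) - h *\<^sub>R g' y) \<le> e * norm h"
        by (simp add: scaleR_sum_right[symmetric] scaleR_diff_right[symmetric] mult.commute mult_left_mono)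
    qed
  qed
  have "(f n has_derivative (\<lambda>h. h *\<^sub>R f' n y)) (at y within S)" if "y \<in> S" for n y
    using f'[OF that] by (simp add: has_vector_derivative_def has_derivative_at_withinI)
  from has_derivative_series[OF S(2) this unif' x summable_sums[OF summable[OF x]]]
  obtain g where g: "\<And>y. y \<in> S \<Longrightarrow> (\<lambda>n. f n y) sums g y \<and> (g has_derivative (\<lambda>h. h *\<^sub>R g' y)) (at y within S)"
    by blast
  have "(g has_vector_derivative g' x) (at x)"
    using g[OF x] at_within_open[OF x S(1)] by (simp add: has_vector_derivative_def)
  then show ?thesis
    by (rule has_vector_derivative_transform_within_open[OF _ S(1) x]) (use g sums_unique in auto)
qed

lemma norm_diff_le_vector_derivative_bound:
  fixes f :: "real \<Rightarrow> 'a::real_normed_vector"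
  assumes "a \<le> b"
    and "\<And>t. t \<in> {a..b} \<Longrightarrow> (f has_vector_derivative f' t) (at t)"
    and "\<And>t. t \<in> {a..b} \<Longrightarrow> norm (f' t) \<le> B"
  shows "norm (f a - f b) \<le> B * (b - a)"
proof -
  have "norm (f a - f b) \<le> B * norm (a - b)"
  proof (rule differentiable_bound[where f' = "\<lambda>t h. h *\<^sub>R f' t" and S = "{a..b}"])
    fix t assume "t \<in> {a..b}"
    then show "(f has_derivative (\<lambda>h. h *\<^sub>R f' t)) (at t within {a..b})"
      using assms(2) by (auto simp: has_vector_derivative_def intro: has_derivative_at_withinI)
  next
    fix t assume "t \<in> {a..b}"
    then show "onorm (\<lambda>h. h *\<^sub>R f' t) \<le> B"
      using assms(3) onorm_scaleR_left[of "\<lambda>h::real. h" "f' t"] by (simp add: onorm_id)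
  qed (use assms(1) in auto)
  then show ?thesis using assms(1) by simp
qed

lemma powr_neg_le_on_unit_interval:
  fixes x t s R :: real
  assumes "1 \<le> x" "x \<le> t" "t \<le> x + 1" "- s \<le> R" "0 \<le> R"
  shows "t powr (- s) \<le> 2 powr R * x powr (- s)"
proof (cases "s \<ge> 0")
  case True
  have "t powr (- s) \<le> x powr (- s)" using True assms by (intro powr_mono2') auto
  also have "\<dots> \<le> 2 powr R * x powr (- s)"
    using assms ge_one_powr_ge_zero[of 2 R] by (simp add: mult_le_cancel_right1)
  finally show ?thesis .
next
  case False
  have "t powr (- s) \<le> (2 * x) powr (- s)" using False assms by (intro powr_mono2) auto
  also have "\<dots> = 2 powr (- s) * x powr (- s)" using assms by (simp add: powr_mult)
  also have "\<dots> \<le> 2 powr R * x powr (- s)" using assms by (intro mult_right_mono) auto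
  finally show ?thesis .
qed

lemma alternating_sums_Euler_step:
  fixes b :: "nat \<Rightarrow> 'a::real_normed_field"
  assumes "b \<longlonglongrightarrow> 0" and "(\<lambda>n. (-1) ^ n * (b n - b (Suc n))) sums T"
  shows "(\<lambda>n. (-1) ^ n * b n) sums ((b 0 + T) / 2)"
proof -
  have partial_sums: "(\<Sum>n<N. (-1) ^ n * b n) = ((\<Sum>n<N. (-1) ^ n * (b n - b (Suc n))) + b 0 - (-1) ^ N * b N) / 2" for N
    by (induction N) (auto simp: field_simps)
  have "(\<lambda>N. norm ((-1) ^ N * b N)) \<longlonglongrightarrow> 0"
    using tendsto_norm_zero[OF assms(1)] by (simp add: norm_mult norm_power)
  then have "(\<lambda>N. (-1) ^ N * b N) \<longlonglongrightarrow> 0"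
    by (rule tendsto_norm_zero_cancel)
  with assms(2) have "(\<lambda>N. ((\<Sum>n<N. (-1) ^ n * (b n - b (Suc n))) + b 0 - (-1) ^ N * b N) / 2) \<longlonglongrightarrow> (T + b 0 - 0) / 2"
    unfolding sums_def by (intro tendsto_intros) auto
  then show ?thesis unfolding sums_def partial_sums by (simp add: add.commute)
qed

lemma Re_norm_bounds_cball:
  assumes "w \<in> cball w0 1"
  shows "Re w0 - 1 \<le> Re w" "norm w \<le> norm w0 + 1"
proof -
  have "norm (w - w0) \<le> 1" using assms by (simp add: dist_norm norm_minus_commute)
  then show "Re w0 - 1 \<le> Re w" "norm w \<le> norm w0 + 1"
    using abs_Re_le_cmod[of "w - w0"] norm_triangle_ineq2[of w w0] by auto
qed

lemma power_series_coeff_eq_higher_deriv: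
  fixes a :: "nat \<Rightarrow> complex"
  assumes "\<And>z. (\<lambda>j. a j * (z - z0) ^ j) sums f z"
  shows "a j = (deriv ^^ j) f z0 / fact j"
proof -
  have "summable (\<lambda>n. a n * 1 ^ n)" using assms[of "z0 + 1"] by (simp add: sums_iff)
  then have "conv_radius a \<ge> norm (1::complex)" by (rule conv_radius_geI)
  then have "conv_radius a > 0" by (rule order.strict_trans2[rotated]) simp
  then have "fps_conv_radius (Abs_fps a) > 0" by (simp add: fps_conv_radius_def)
  moreover have "eval_fps (Abs_fps a) w = (f \<circ> (\<lambda>x. z0 + x)) w" for w
    using assms[of "z0 + w"] by (simp add: eval_fps_def sums_iff)
  ultimately have "(f \<circ> (\<lambda>x. z0 + x)) has_fps_expansion Abs_fps a"
    unfolding has_fps_expansion_def by auto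
  from fps_nth_fps_expansion[OF this, of j] show ?thesis
    by (simp add: higher_deriv_shift_0[symmetric])
qed

lemma has_integral_higher_deriv_circlepath:
  assumes "0 < r" "continuous_on (cball z r) F" "F holomorphic_on ball z r"
  shows "((\<lambda>t. F (circlepath z r t) * vector_derivative (circlepath z r) (at t) / (circlepath z r t - z) ^ Suc l)
    has_integral (2 * pi * \<i> / fact l * (deriv ^^ l) F z)) {0..1}"
proof -
  have "((\<lambda>u. F u / (u - z) ^ Suc l) has_contour_integral (2 * pi * \<i> / fact l * (deriv ^^ l) F z)) (circlepath z r)"
    using assms by (intro Cauchy_has_contour_integral_higher_derivative_circlepath) auto
  then show ?thesis
    unfolding has_contour_integral_def
    by (rule has_integral_cong[THEN iffD1, rotated])
       (simp add: vector_derivative_circlepath01 vector_derivative_circlepath)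
qed

text \<open>By Cauchy's formula, \<open>\<partial>\<^sub>w\<^sup>l\<close> is an integral over a circle; differentiating in \<open>q\<close>
  under that integral (Leibniz's rule) shows that \<open>\<partial>\<^sub>q\<close> and \<open>\<partial>\<^sub>w\<^sup>l\<close> commute.\<close>
lemma has_vector_derivative_higher_deriv_parametric:
  fixes \<Phi> \<Psi> :: "complex \<Rightarrow> real \<Rightarrow> complex"
  assumes U: "open U" "convex U"
    and hol\<Phi>: "\<And>q. q \<in> U \<Longrightarrow> (\<lambda>w. \<Phi> w q) holomorphic_on UNIV"
    and hol\<Psi>: "\<And>q. q \<in> U \<Longrightarrow> (\<lambda>w. \<Psi> w q) holomorphic_on UNIV"
    and der: "\<And>w q. q \<in> U \<Longrightarrow> ((\<lambda>q. \<Phi> w q) has_vector_derivative \<Psi> w q) (at q)"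
    and cont: "continuous_on (UNIV \<times> U) (\<lambda>p. \<Psi> (fst p) (snd p))"
    and q0: "q0 \<in> U"
  shows "((\<lambda>q. (deriv ^^ l) (\<lambda>w. \<Phi> w q) z) has_vector_derivative (deriv ^^ l) (\<lambda>w. \<Psi> w q0) z) (at q0)"
proof -
  define \<gamma> where "\<gamma> = circlepath z 1"
  define k where "k t = vector_derivative \<gamma> (at t) / (\<gamma> t - z) ^ Suc l" for t
  define c :: complex where "c = 2 * pi * \<i> / fact l"
  have c: "c \<noteq> 0" by (simp add: c_def)
  have integral: "((\<lambda>t. F (\<gamma> t) * k t) has_integral c * (deriv ^^ l) F z) {0..1}"
    if "F holomorphic_on UNIV" for F
  proof -
    have "F holomorphic_on cball z 1" "F holomorphic_on ball z 1"
      by (rule holomorphic_on_subset[OF that], simp)+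
    from has_integral_higher_deriv_circlepath[OF zero_less_one holomorphic_on_imp_continuous_on[OF this(1)] this(2)]
    show ?thesis by (simp add: \<gamma>_def k_def c_def)
  qed
  have \<gamma>_cont: "continuous_on {0..1} \<gamma>"
    using path_circlepath[of z 1] unfolding \<gamma>_def path_def .
  have "\<gamma> t - z \<noteq> 0" for t by (simp add: \<gamma>_def circlepath)
  then have k_cont: "continuous_on {0..1} k"
    unfolding k_def using \<gamma>_cont by (auto simp: \<gamma>_def vector_derivative_circlepath intro!: continuous_intros)
  have "continuous_on (U \<times> {0..1}) (\<lambda>p. \<Psi> (fst (\<gamma> (snd p), fst p)) (snd (\<gamma> (snd p), fst p)))"
    by (rule continuous_on_compose2[OF cont])
       (auto intro!: continuous_intros continuous_on_compose2[OF \<gamma>_cont])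
  moreover have "continuous_on (U \<times> {0..1}) (\<lambda>p. k (snd p))"
    by (rule continuous_on_compose2[OF k_cont]) (auto intro!: continuous_intros)
  ultimately have joint_cont: "continuous_on (U \<times> cbox 0 1) (\<lambda>(q, t). \<Psi> (\<gamma> t) q * k t)"
    using continuous_on_mult by (fastforce simp: case_prod_beta cbox_interval)
  have "((\<lambda>q. integral (cbox 0 1) (\<lambda>t. \<Phi> (\<gamma> t) q * k t)) has_vector_derivative
      integral (cbox 0 1) (\<lambda>t. \<Psi> (\<gamma> t) q0 * k t)) (at q0 within U)"
  proof (rule leibniz_rule_vector_derivative[OF _ _ joint_cont q0 U(2)])
    fix q t assume "q \<in> U"
    then show "((\<lambda>q. \<Phi> (\<gamma> t) q * k t) has_vector_derivative \<Psi> (\<gamma> t) q * k t) (at q within U)"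
      by (intro has_vector_derivative_at_within[OF has_vector_derivative_mult_left] der)
  next
    fix q assume "q \<in> U"
    then show "(\<lambda>t. \<Phi> (\<gamma> t) q * k t) integrable_on cbox 0 1"
      using integral[OF hol\<Phi>] by (auto simp: cbox_interval intro: has_integral_integrable)
  qed
  then have "((\<lambda>q. integral {0..1} (\<lambda>t. \<Phi> (\<gamma> t) q * k t) / c) has_vector_derivative
      c * (deriv ^^ l) (\<lambda>w. \<Psi> w q0) z / c) (at q0)"
    unfolding at_within_open[OF q0 U(1)] integral_unique[OF integral[OF hol\<Psi>[OF q0]], symmetric] cbox_interval
    by (rule has_vector_derivative_divide)
  then have "((\<lambda>q. integral {0..1} (\<lambda>t. \<Phi> (\<gamma> t) q * k t) / c) has_vector_derivative
      (deriv ^^ l) (\<lambda>w. \<Psi> w q0) z) (at q0)"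
    using c by simp
  then show ?thesis
  proof (rule has_vector_derivative_transform_within_open[OF _ U(1) q0])
    show "integral {0..1} (\<lambda>t. \<Phi> (\<gamma> t) q * k t) / c = (deriv ^^ l) (\<lambda>w. \<Phi> w q) z" if "q \<in> U" for q
      using integral[OF hol\<Phi>[OF that]] c by (simp add: integral_unique)
  qed
qed

lemma higher_vderiv_0 [simp]: "higher_vderiv 0 f = f"
  by (simp add: higher_vderiv_def)

lemma higher_vderiv_Suc: "higher_vderiv (Suc n) f = higher_vderiv n (\<lambda>x. vector_derivative f (at x))"
  unfolding higher_vderiv_def by (simp only: funpow_Suc_right o_def)

lemma higher_vderiv_cong_open:
  assumes "open S" "x \<in> S" "\<And>y. y \<in> S \<Longrightarrow> f y = g y"
  shows "higher_vderiv n f x = higher_vderiv n g x"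
  using assms(2,3)
proof (induction n arbitrary: f g x)
  case (Suc n)
  have "vector_derivative f (at y) = vector_derivative g (at y)" if "y \<in> S" for y
  proof (rule vector_derivative_cong_eq)
    show "\<forall>\<^sub>F x in nhds y. x \<in> UNIV \<longrightarrow> f x = g x"
      using eventually_nhds_in_open[OF assms(1) that] by (rule eventually_mono) (simp add: Suc.prems(2))
  qed auto
  then show ?case unfolding higher_vderiv_Suc by (rule Suc.IH[OF Suc.prems(1)])
qed simp

lemma pochhammer_Suc_eq_stirling_sum:
  fixes t :: "'a::{idom,ring_char_0}"
  shows "pochhammer (t + 1) n = (\<Sum>j\<le>n. of_nat (stirling (Suc n) (Suc j)) * t ^ j)"
proof (cases "t = 0")
  case True
  have "(\<Sum>j\<le>m. f j * (0::'a) ^ j) = f 0" for f :: "nat \<Rightarrow> 'a" and m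
    by (induction m) simp_all
  then show ?thesis
    using True by (simp add: pochhammer_fact[symmetric] stirling_Suc_n_1 of_nat_fact del: stirling.simps)
next
  case False
  have "t * pochhammer (t + 1) n = pochhammer t (Suc n)" by (simp add: pochhammer_rec)
  also have "\<dots> = (\<Sum>k\<le>Suc n. of_nat (stirling (Suc n) k) * t ^ k)" by (rule stirling_pochhammer[symmetric])
  also have "\<dots> = t * (\<Sum>j\<le>n. of_nat (stirling (Suc n) (Suc j)) * t ^ j)"
    by (subst sum.atMost_Suc_shift) (simp add: sum_distrib_left mult_ac del: stirling.simps)
  finally show ?thesis using False by simp
qed

lemma higher_deriv_pochhammer_at_1:
  "(deriv ^^ i) (\<lambda>w. pochhammer w n) (1::complex) = fact i * of_nat (stirling (Suc n) (Suc i))"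
proof -
  have "(\<lambda>j. of_nat (stirling (Suc n) (Suc j)) * (z - 1) ^ j) sums pochhammer z n" for z :: complex
    using sums_finite[of "{..n}" "\<lambda>j. of_nat (stirling (Suc n) (Suc j)) * (z - 1) ^ j"]
      pochhammer_Suc_eq_stirling_sum[of "z - 1" n] by simp
  from power_series_coeff_eq_higher_deriv[OF this, of i] show ?thesis
    by (simp add: field_simps)
qed

lemma higher_deriv_prod_neg_at_1:
  "(deriv ^^ i) (\<lambda>w. \<Prod>j<n. - (w + of_nat j)) (1::complex)
    = (-1) ^ i * fact i * of_int (stirling1_signed (n + 1) (i + 1))"
proof -
  have "(\<lambda>w. \<Prod>j<n. - (w + of_nat j)) = (\<lambda>w::complex. (-1) ^ n * pochhammer w n)"
    by (rule ext, induction n) (auto simp: pochhammer_Suc algebra_simps)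
  then have "(deriv ^^ i) (\<lambda>w. \<Prod>j<n. - (w + of_nat j)) (1::complex)
      = (-1) ^ n * (deriv ^^ i) (\<lambda>w. pochhammer w n) 1"
    by (simp only:) (rule higher_deriv_cmult[where A = UNIV], auto intro: holomorphic_intros)
  also have "\<dots> = (-1) ^ n * (fact i * of_nat (stirling (Suc n) (Suc i)))"
    by (simp only: higher_deriv_pochhammer_at_1)
  also have "(-1::complex) ^ n = (-1) ^ i * (-1) ^ (n + 1 + (i + 1))"
    by (simp add: power_add flip: mult.assoc power_mult_distrib)
  finally show ?thesis by (simp add: stirling1_signed_def mult_ac del: stirling.simps)
qed

section \<open>Differences of \<open>x\<^sup>-\<^sup>w\<close>\<close>

definition inv_powr :: "complex \<Rightarrow> real \<Rightarrow> complex" where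
  "inv_powr w x = exp (- w * Ln (complex_of_real x))"

fun diff_inv_powr :: "nat \<Rightarrow> complex \<Rightarrow> real \<Rightarrow> complex" where
  "diff_inv_powr 0 w x = inv_powr w x"
| "diff_inv_powr (Suc K) w x = diff_inv_powr K w x - diff_inv_powr K w (x + 1)"

lemma norm_inv_powr: "x > 0 \<Longrightarrow> norm (inv_powr w x) = x powr (- Re w)"
  by (simp add: inv_powr_def norm_exp_eq_Re Ln_of_real powr_def)

lemma inv_powr_of_real_powr:
  assumes "x > 0"
  shows "inv_powr w x = 1 / complex_of_real x powr w"
  using assms by (simp add: inv_powr_def powr_def exp_minus inverse_eq_divide)

lemma has_vector_derivative_inv_powr:
  assumes "x > 0"
  shows "(inv_powr w has_vector_derivative (- w * inv_powr (w + 1) x)) (at x)"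
proof -
  have "complex_of_real x \<notin> \<real>\<^sub>\<le>\<^sub>0" using assms by (auto simp: nonpos_Reals_def)
  then have "((\<lambda>u. exp (- w * Ln u)) has_field_derivative
      exp (- w * Ln (complex_of_real x)) * (- w * inverse (complex_of_real x))) (at (complex_of_real x))"
    by (auto intro!: derivative_eq_intros)
  then have "(inv_powr w has_vector_derivative
      exp (- w * Ln (complex_of_real x)) * (- w * inverse (complex_of_real x))) (at x)"
    unfolding inv_powr_def by (rule has_vector_derivative_real_field)
  moreover have "exp (- w * Ln (complex_of_real x)) * inverse (complex_of_real x) = inv_powr (w + 1) x"
    using assms by (simp add: inv_powr_def algebra_simps exp_diff exp_minus divide_inverse)
  ultimately show ?thesis by (simp add: mult_ac)
qed

lemma has_vector_derivative_diff_inv_powr: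
  assumes "c + x > 0"
  shows "((\<lambda>x. diff_inv_powr K w (c + x)) has_vector_derivative
      (- w * diff_inv_powr K (w + 1) (c + x))) (at x)"
  using assms
proof (induction K arbitrary: c)
  case 0
  have "((\<lambda>x. c + x) has_vector_derivative 1) (at x)"
    by (auto intro!: derivative_eq_intros)
  from vector_diff_chain_at[OF this has_vector_derivative_inv_powr[OF "0"]]
  have "(inv_powr w \<circ> (\<lambda>x. c + x) has_vector_derivative 1 *\<^sub>R (- w * inv_powr (w + 1) (c + x))) (at x)" .
  then show ?case by (simp add: o_def)
next
  case (Suc K)
  have "((\<lambda>x. diff_inv_powr K w ((c + 1) + x)) has_vector_derivative
      (- w * diff_inv_powr K (w + 1) ((c + 1) + x))) (at x)"
    by (rule Suc.IH) (use Suc.prems in simp)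
  from has_vector_derivative_diff[OF Suc.IH[OF Suc.prems] this]
  show ?case by (simp add: algebra_simps)
qed

lemma holomorphic_diff_inv_powr: "(\<lambda>w. diff_inv_powr K w x) holomorphic_on UNIV"
  by (induction K arbitrary: x) (auto simp: inv_powr_def intro!: holomorphic_intros)

lemma continuous_on_diff_inv_powr:
  "continuous_on (UNIV \<times> {0<..}) (\<lambda>p. diff_inv_powr K (fst p) (snd p))"
proof (induction K)
  case 0
  show ?case unfolding diff_inv_powr.simps inv_powr_def
    by (intro continuous_intros) (auto simp: nonpos_Reals_def)
next
  case (Suc K)
  have "continuous_on (UNIV \<times> {0<..}) (\<lambda>p. diff_inv_powr K (fst (fst p, snd p + 1)) (snd (fst p, snd p + 1)))"
    by (rule continuous_on_compose2[OF Suc]) (auto intro!: continuous_intros)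
  then show ?case using Suc by (simp add: continuous_on_diff)
qed

text \<open>Each difference gains a factor \<open>x\<^sup>-\<^sup>1\<close>: by the mean value theorem, since the
  \<open>x\<close>-derivative of the \<open>K\<close>-th difference at \<open>w\<close> is \<open>-w\<close> times the \<open>K\<close>-th difference
  at \<open>w + 1\<close>.\<close>
lemma diff_inv_powr_bound:
  assumes "R \<ge> 0"
  shows "\<exists>C\<ge>0. \<forall>w x. norm w \<le> R \<longrightarrow> 1 \<le> x \<longrightarrow>
    norm (diff_inv_powr K w x) \<le> C * x powr (- Re w - real K)"
  using assms
proof (induction K arbitrary: R)
  case 0
  then show ?case by (intro exI[of _ 1]) (auto simp: norm_inv_powr)
next
  case (Suc K)
  obtain C where C: "C \<ge> 0" "\<And>w x. norm w \<le> R + 1 \<Longrightarrow> 1 \<le> x \<Longrightarrow>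
      norm (diff_inv_powr K w x) \<le> C * x powr (- Re w - real K)"
    using Suc.IH[of "R + 1"] Suc.prems by auto
  show ?case
  proof (intro exI[of _ "R * C * 2 powr R"] conjI allI impI)
    show "0 \<le> R * C * 2 powr R" using C Suc.prems by auto
    fix w :: complex and x :: real
    assume w: "norm w \<le> R" and x: "1 \<le> x"
    have w1: "norm (w + 1) \<le> R + 1" using w norm_triangle_ineq[of w 1] by auto
    have bound: "norm (- w * diff_inv_powr K (w + 1) t) \<le> R * C * 2 powr R * x powr (- Re w - real (Suc K))"
      if t: "t \<in> {x..x+1}" for t
    proof -
      have "norm (- w * diff_inv_powr K (w + 1) t) = norm w * norm (diff_inv_powr K (w + 1) t)"
        by (simp add: norm_mult)
      also have "\<dots> \<le> R * (C * t powr (- Re (w + 1) - real K))"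
        using w C(2)[OF w1, of t] t x Suc.prems by (intro mult_mono) auto
      also have "\<dots> = R * (C * t powr (- (Re w + 1 + real K)))"
        by (simp add: algebra_simps)
      also have "\<dots> \<le> R * (C * (2 powr R * x powr (- (Re w + 1 + real K))))"
        using t x Suc.prems abs_Re_le_cmod[of w] w C(1)
        by (intro mult_left_mono powr_neg_le_on_unit_interval) auto
      finally show ?thesis by (simp add: mult_ac add_ac diff_diff_eq)
    qed
    have "norm (diff_inv_powr K w x - diff_inv_powr K w (x + 1))
        \<le> R * C * 2 powr R * x powr (- Re w - real (Suc K)) * ((x + 1) - x)"
    proof (rule norm_diff_le_vector_derivative_bound)
      fix t assume "t \<in> {x..x+1}"
      then show "(diff_inv_powr K w has_vector_derivative - w * diff_inv_powr K (w + 1) t) (at t)"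
        using has_vector_derivative_diff_inv_powr[where c = 0 and x = t, unfolded add_0_left] x by simp
    qed (use bound in auto)
    then show "norm (diff_inv_powr (Suc K) w x) \<le> R * C * 2 powr R * x powr (- Re w - real (Suc K))"
      by simp
  qed
qed

lemma diff_inv_powr_bound_nat:
  assumes "R \<ge> 0" "\<sigma> \<ge> 0"
  obtains C where "\<And>w q n. norm w \<le> R \<Longrightarrow> \<sigma> \<le> Re w + real K \<Longrightarrow> q > 0 \<Longrightarrow> n \<ge> 1 \<Longrightarrow>
      norm (diff_inv_powr K w (real n + q)) \<le> C * real n powr (- \<sigma>)"
proof -
  obtain C where C: "C \<ge> 0" "\<And>w x. norm w \<le> R \<Longrightarrow> 1 \<le> x \<Longrightarrow>
      norm (diff_inv_powr K w x) \<le> C * x powr (- Re w - real K)"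
    using diff_inv_powr_bound[OF assms(1), of K] by auto
  show ?thesis
  proof (rule that)
    fix w :: complex and q :: real and n :: nat
    assume w: "norm w \<le> R" and \<sigma>: "\<sigma> \<le> Re w + real K" and "q > 0" "n \<ge> 1"
    then have x: "1 \<le> real n + q" by simp
    have "norm (diff_inv_powr K w (real n + q)) \<le> C * (real n + q) powr (- Re w - real K)"
      using C(2)[OF w x] .
    also have "\<dots> \<le> C * real n powr (- \<sigma>)"
      using \<sigma> x \<open>n \<ge> 1\<close> \<open>q > 0\<close> assms(2) C(1)
      by (intro mult_left_mono order.trans[OF powr_mono powr_mono2']) auto
    finally show "norm (diff_inv_powr K w (real n + q)) \<le> C * real n powr (- \<sigma>)" .
  qed
qed

lemma diff_inv_powr_bound_at:
  assumes "q > 0" "Re w + real K \<ge> 0"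
  obtains C where "\<And>n. n \<ge> 1 \<Longrightarrow> norm (diff_inv_powr K w (real n + q)) \<le> C * real n powr (- (Re w + real K))"
proof -
  obtain C where "\<And>v q n. norm v \<le> norm w \<Longrightarrow> Re w + real K \<le> Re v + real K \<Longrightarrow> q > 0 \<Longrightarrow> n \<ge> 1 \<Longrightarrow>
      norm (diff_inv_powr K v (real n + q)) \<le> C * real n powr (- (Re w + real K))"
    using diff_inv_powr_bound_nat[OF norm_ge_zero assms(2)] by metis
  with assms(1) show ?thesis by (intro that) auto
qed

lemma summable_norm_diff_inv_powr:
  assumes "q > 0" "Re w + real K > 1"
  shows "summable (\<lambda>n. norm (diff_inv_powr K w (real n + q)))"
proof -
  obtain C where C: "\<And>n. n \<ge> 1 \<Longrightarrow> norm (diff_inv_powr K w (real n + q)) \<le> C * real n powr (- (Re w + real K))"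
    using diff_inv_powr_bound_at[of q w K] assms by auto
  have "summable (\<lambda>n. C * real n powr (- (Re w + real K)))"
    using assms by (intro summable_mult) (simp add: summable_real_powr_iff)
  then show ?thesis
    by (rule summable_comparison_test'[where N = 1]) (use C in auto)
qed

lemma diff_inv_powr_tendsto_0:
  assumes "q > 0" "Re w + real K > 0"
  shows "(\<lambda>n. diff_inv_powr K w (real n + q)) \<longlonglongrightarrow> 0"
proof -
  obtain C where C: "\<And>n. n \<ge> 1 \<Longrightarrow> norm (diff_inv_powr K w (real n + q)) \<le> C * real n powr (- (Re w + real K))"
    using diff_inv_powr_bound_at[of q w K] assms by auto
  have "(\<lambda>n. C * real n powr (- (Re w + real K))) \<longlonglongrightarrow> 0"
    using assms by (intro tendsto_mult_right_zero tendsto_neg_powr filterlim_real_sequentially) auto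
  moreover have "\<forall>\<^sub>F n in sequentially. norm (diff_inv_powr K w (real n + q)) \<le> C * real n powr (- (Re w + real K))"
    using C by (intro eventually_sequentiallyI[of 1]) auto
  ultimately show ?thesis by (metis Lim_null_comparison)
qed

section \<open>Analytic continuation of \<open>\<zeta>\<^sub>E\<close> by Euler's transformation\<close>

definition alt_diff_sum :: "nat \<Rightarrow> complex \<Rightarrow> real \<Rightarrow> complex" where
  "alt_diff_sum K w q = (\<Sum>n. (-1) ^ n * diff_inv_powr K w (real n + q))"

text \<open>The result of \<open>K\<close> steps of Euler's transformation applied to the series
  \<open>\<Sum>\<^sub>n (-1)\<^sup>n (n + q)\<^sup>-\<^sup>w\<close>, which is the case \<open>K = 0\<close>.\<close>
definition Euler_sum :: "nat \<Rightarrow> complex \<Rightarrow> real \<Rightarrow> complex" where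
  "Euler_sum K w q = (\<Sum>j<K. diff_inv_powr j w q / 2 ^ Suc j) + alt_diff_sum K w q / 2 ^ K"

text \<open>Any \<open>K\<close> with \<open>Re w + K > 0\<close> gives the same value (\<open>Euler_sum_eq\<close>); the choice
  \<open>Re w + K \<ge> 2\<close> leaves room for uniform estimates near \<open>w\<close>.\<close>
definition zetaE_Euler :: "complex \<Rightarrow> real \<Rightarrow> complex" where
  "zetaE_Euler w q = Euler_sum (nat \<lceil>2 - Re w\<rceil>) w q"

lemma alt_diff_sum_sums:
  assumes "q > 0" "Re w + real K > 1"
  shows "(\<lambda>n. (-1) ^ n * diff_inv_powr K w (real n + q)) sums alt_diff_sum K w q"
proof -
  have "summable (\<lambda>n. norm ((-1) ^ n * diff_inv_powr K w (real n + q)))"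
    using summable_norm_diff_inv_powr[OF assms] by (simp add: norm_mult norm_power)
  then show ?thesis unfolding alt_diff_sum_def by (rule summable_sums[OF summable_norm_cancel])
qed

lemma alt_diff_sum_Suc:
  assumes "q > 0" "Re w + real K > 0"
  shows "alt_diff_sum K w q = (diff_inv_powr K w q + alt_diff_sum (Suc K) w q) / 2"
proof -
  have "(\<lambda>n. (-1) ^ n * (diff_inv_powr K w (real n + q) - diff_inv_powr K w (real (Suc n) + q)))
      sums alt_diff_sum (Suc K) w q"
    using alt_diff_sum_sums[of q w "Suc K"] assms by (simp add: add_ac)
  from alternating_sums_Euler_step[OF diff_inv_powr_tendsto_0[OF assms] this]
  show ?thesis by (simp add: sums_iff alt_diff_sum_def)
qed

lemma Euler_sum_Suc:
  assumes "q > 0" "Re w + real K > 0"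
  shows "Euler_sum (Suc K) w q = Euler_sum K w q"
  unfolding Euler_sum_def alt_diff_sum_Suc[OF assms] by (simp add: field_simps)

lemma Euler_sum_eq:
  assumes "q > 0" "Re w + real K > 0" "Re w + real K' > 0"
  shows "Euler_sum K w q = Euler_sum K' w q"
proof -
  have *: "Euler_sum K2 w q = Euler_sum K1 w q" if "Re w + real K1 > 0" "K1 \<le> K2" for K1 K2
    using that(2) by (induction K2 rule: dec_induct) (use Euler_sum_Suc assms(1) that(1) in auto)
  show ?thesis
    using *[of K "max K K'"] *[of K' "max K K'"] assms by simp
qed

lemma zetaE_Euler_eq_Euler_sum:
  assumes "q > 0" "Re w + real K > 0"
  shows "zetaE_Euler w q = Euler_sum K w q"
proof -
  have "Re w + real (nat \<lceil>2 - Re w\<rceil>) \<ge> 2" by linarith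
  then show ?thesis unfolding zetaE_Euler_def using assms by (intro Euler_sum_eq) auto
qed

lemma sums_zetaE_Euler:
  assumes "q > 0" "Re w > 0"
  shows "(\<lambda>n. (-1) ^ n * inv_powr w (real n + q)) sums zetaE_Euler w q"
proof -
  have "(\<lambda>n. inv_powr w (real n + q)) \<longlonglongrightarrow> 0"
    using diff_inv_powr_tendsto_0[of q w 0] assms by simp
  moreover have "(\<lambda>n. (-1) ^ n * (inv_powr w (real n + q) - inv_powr w (real (Suc n) + q)))
      sums alt_diff_sum 1 w q"
    using alt_diff_sum_sums[of q w 1] assms by (simp add: add_ac)
  ultimately have "(\<lambda>n. (-1) ^ n * inv_powr w (real n + q)) sums ((inv_powr w q + alt_diff_sum 1 w q) / 2)"
    using alternating_sums_Euler_step[of "\<lambda>n. inv_powr w (real n + q)"] by simp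
  moreover have "zetaE_Euler w q = Euler_sum 1 w q"
    using zetaE_Euler_eq_Euler_sum[of q w 1] assms by simp
  ultimately show ?thesis by (simp add: Euler_sum_def add_divide_distrib)
qed

lemma uniform_limit_alt_diff_sum:
  assumes "R \<ge> 0"
  shows "uniform_limit {p. norm (fst p) \<le> R \<and> 2 \<le> Re (fst p) + real K \<and> 0 < snd p}
    (\<lambda>N p. \<Sum>n<N. (-1) ^ n * diff_inv_powr K (fst p) (real n + snd p))
    (\<lambda>p. alt_diff_sum K (fst p) (snd p)) sequentially"
proof -
  obtain C where C: "\<And>w q n. norm w \<le> R \<Longrightarrow> 2 \<le> Re w + real K \<Longrightarrow> q > 0 \<Longrightarrow> n \<ge> 1 \<Longrightarrow>
      norm (diff_inv_powr K w (real n + q)) \<le> C * real n powr (- 2)"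
    using diff_inv_powr_bound_nat[OF assms, where \<sigma> = 2 and K = K] by auto
  have "summable (\<lambda>n. C * real n powr (- 2))"
    by (intro summable_mult) (simp add: summable_real_powr_iff)
  then show ?thesis unfolding alt_diff_sum_def
    by (rule Weierstrass_m_test_ev[rotated])
       (use C in \<open>intro eventually_sequentiallyI[of 1], auto simp: norm_mult norm_power\<close>)
qed

lemma continuous_on_alt_diff_sum:
  assumes "R \<ge> 0"
  shows "continuous_on {p. norm (fst p) \<le> R \<and> 2 \<le> Re (fst p) + real K \<and> 0 < snd p}
    (\<lambda>p. alt_diff_sum K (fst p) (snd p))"
proof (rule uniform_limit_theorem[OF _ uniform_limit_alt_diff_sum[OF assms]])
  have "continuous_on {p. 0 < snd p} (\<lambda>p. diff_inv_powr K (fst (fst p, real n + snd p)) (snd (fst p, real n + snd p)))" for n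
    by (rule continuous_on_compose2[OF continuous_on_diff_inv_powr]) (auto intro!: continuous_intros)
  then have "continuous_on {p. 0 < snd p} (\<lambda>p. diff_inv_powr K (fst p) (real n + snd p))" for n
    by simp
  then have "continuous_on {p. norm (fst p) \<le> R \<and> 2 \<le> Re (fst p) + real K \<and> 0 < snd p}
      (\<lambda>p. diff_inv_powr K (fst p) (real n + snd p))" for n
    by (rule continuous_on_subset) auto
  then show "\<forall>\<^sub>F N in sequentially. continuous_on {p. norm (fst p) \<le> R \<and> 2 \<le> Re (fst p) + real K \<and> 0 < snd p}
      (\<lambda>p. \<Sum>n<N. (-1) ^ n * diff_inv_powr K (fst p) (real n + snd p))"
    by (intro always_eventually allI continuous_intros)
qed simp

lemma continuous_on_zetaE_Euler: "continuous_on (UNIV \<times> {0<..}) (\<lambda>p. zetaE_Euler (fst p) (snd p))"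
proof (rule continuous_at_imp_continuous_on, rule ballI)
  fix p :: "complex \<times> real"
  assume "p \<in> UNIV \<times> {0<..}"
  then obtain w0 q0 where p: "p = (w0, q0)" and "q0 > 0" by auto
  define K where "K = nat \<lceil>3 - Re w0\<rceil>"
  define T where "T = ball w0 1 \<times> {0::real<..}"
  have K: "3 \<le> Re w0 + real K" unfolding K_def by linarith
  have T_bounds: "norm (fst p) \<le> norm w0 + 1 \<and> 2 \<le> Re (fst p) + real K \<and> 0 < snd p" if "p \<in> T" for p
  proof -
    have "fst p \<in> cball w0 1" "0 < snd p" using that by (auto simp: T_def mem_Times_iff)
    with Re_norm_bounds_cball[of "fst p" w0] K show ?thesis by auto
  qed
  have "continuous_on T (\<lambda>p. alt_diff_sum K (fst p) (snd p))"
    by (rule continuous_on_subset[OF continuous_on_alt_diff_sum[of "norm w0 + 1"]]) (use T_bounds in auto)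
  moreover have "continuous_on T (\<lambda>p. diff_inv_powr j (fst p) (snd p))" for j
    by (rule continuous_on_subset[OF continuous_on_diff_inv_powr]) (auto simp: T_def)
  ultimately have "continuous_on T (\<lambda>p. Euler_sum K (fst p) (snd p))"
    unfolding Euler_sum_def by (intro continuous_intros) auto
  moreover have "continuous_on T (\<lambda>p. zetaE_Euler (fst p) (snd p)) = continuous_on T (\<lambda>p. Euler_sum K (fst p) (snd p))"
  proof (rule continuous_on_cong[OF refl])
    fix p assume "p \<in> T"
    with T_bounds[of p] show "zetaE_Euler (fst p) (snd p) = Euler_sum K (fst p) (snd p)"
      by (intro zetaE_Euler_eq_Euler_sum) auto
  qed
  ultimately have "continuous_on T (\<lambda>p. zetaE_Euler (fst p) (snd p))"
    by simp
  moreover have "open T" "p \<in> T"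
    using \<open>q0 > 0\<close> by (auto simp: T_def p intro: open_Times)
  ultimately show "isCont (\<lambda>p. zetaE_Euler (fst p) (snd p)) p"
    by (simp add: continuous_on_eq_continuous_at)
qed

lemma holomorphic_zetaE_Euler:
  assumes "q > 0"
  shows "(\<lambda>w. zetaE_Euler w q) holomorphic_on UNIV"
proof -
  have "(\<lambda>w. zetaE_Euler w q) holomorphic_on ball w0 1" for w0
  proof -
    define K where "K = nat \<lceil>3 - Re w0\<rceil>"
    have K: "3 \<le> Re w0 + real K" unfolding K_def by linarith
    have bounds: "norm w \<le> norm w0 + 1 \<and> 2 \<le> Re w + real K" if "w \<in> cball w0 1" for w
      using Re_norm_bounds_cball[OF that] K by auto
    have "(\<lambda>w. (w, q)) \<in> cball w0 1 \<rightarrow> {p. norm (fst p) \<le> norm w0 + 1 \<and> 2 \<le> Re (fst p) + real K \<and> 0 < snd p}"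
      using bounds assms by auto
    from uniform_limit_compose'[OF uniform_limit_alt_diff_sum[of "norm w0 + 1" K] this]
    have unif: "uniform_limit (cball w0 1) (\<lambda>N w. \<Sum>n<N. (-1) ^ n * diff_inv_powr K w (real n + q))
        (\<lambda>w. alt_diff_sum K w q) sequentially"
      by simp
    have "(\<lambda>w. \<Sum>n<N. (-1) ^ n * diff_inv_powr K w (real n + q)) holomorphic_on UNIV" for N
      by (intro holomorphic_intros holomorphic_diff_inv_powr)
    then have "\<forall>\<^sub>F N in sequentially. continuous_on (cball w0 1) (\<lambda>w. \<Sum>n<N. (-1) ^ n * diff_inv_powr K w (real n + q))
        \<and> (\<lambda>w. \<Sum>n<N. (-1) ^ n * diff_inv_powr K w (real n + q)) holomorphic_on ball w0 1"
      by (intro always_eventually allI conjI holomorphic_on_imp_continuous_on)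
         (meson holomorphic_on_subset subset_UNIV)+
    from holomorphic_uniform_limit[OF this unif trivial_limit_sequentially]
    obtain "(\<lambda>w. alt_diff_sum K w q) holomorphic_on ball w0 1" .
    then have "(\<lambda>w. Euler_sum K w q) holomorphic_on ball w0 1"
      unfolding Euler_sum_def
      by (intro holomorphic_intros holomorphic_on_subset[OF holomorphic_diff_inv_powr]) auto
    moreover have "(\<lambda>w. zetaE_Euler w q) holomorphic_on ball w0 1 \<longleftrightarrow> (\<lambda>w. Euler_sum K w q) holomorphic_on ball w0 1"
    proof (rule holomorphic_cong[OF refl])
      fix w assume "w \<in> ball w0 1"
      with bounds[of w] assms show "zetaE_Euler w q = Euler_sum K w q"
        by (intro zetaE_Euler_eq_Euler_sum) auto
    qed
    ultimately show ?thesis by simp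
  qed
  then have "(\<lambda>w. zetaE_Euler w q) analytic_on UNIV"
    unfolding analytic_on_def using zero_less_one by blast
  then show ?thesis by (rule analytic_imp_holomorphic)
qed

lemma has_vector_derivative_alt_diff_sum:
  assumes "q > 0" "2 \<le> Re w + real K"
  shows "((\<lambda>q. alt_diff_sum K w q) has_vector_derivative (- w * alt_diff_sum K (w + 1) q)) (at q)"
proof -
  have "(\<lambda>q. (w + 1, q)) \<in> {0<..} \<rightarrow> {p. norm (fst p) \<le> norm (w + 1) \<and> 2 \<le> Re (fst p) + real K \<and> 0 < snd p}"
    using assms(2) by auto
  from uniform_limit_compose'[OF uniform_limit_alt_diff_sum[of "norm (w + 1)" K] this]
  have "uniform_limit {0<..} (\<lambda>N q. \<Sum>n<N. (-1) ^ n * diff_inv_powr K (w + 1) (real n + q))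
      (\<lambda>q. alt_diff_sum K (w + 1) q) sequentially"
    by simp
  then have "uniform_limit {0<..} (\<lambda>N q. - w * (\<Sum>n<N. (-1) ^ n * diff_inv_powr K (w + 1) (real n + q)))
      (\<lambda>q. - w * alt_diff_sum K (w + 1) q) sequentially"
    by (rule uniform_limit_intros)
  then have "uniform_limit {0<..} (\<lambda>N q. \<Sum>n<N. (-1) ^ n * (- w * diff_inv_powr K (w + 1) (real n + q)))
      (\<lambda>q. - w * alt_diff_sum K (w + 1) q) sequentially"
    by (simp add: sum_distrib_left mult.left_commute)
  moreover have "((\<lambda>x. (-1) ^ n * diff_inv_powr K w (real n + x)) has_vector_derivative
      (-1) ^ n * (- w * diff_inv_powr K (w + 1) (real n + x))) (at x)" if "x \<in> {0<..}" for n x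
    using that by (intro has_vector_derivative_mult_right has_vector_derivative_diff_inv_powr) auto
  moreover have "summable (\<lambda>n. (-1) ^ n * diff_inv_powr K w (real n + x))" if "x \<in> {0<..}" for x
    using alt_diff_sum_sums[of x w K] that assms(2) by (auto simp: sums_iff)
  ultimately show ?thesis unfolding alt_diff_sum_def[of K w]
    using assms(1) by (intro has_vector_derivative_suminf[of "{0<..}"]) auto
qed

lemma has_vector_derivative_zetaE_Euler:
  assumes "q > 0"
  shows "((\<lambda>q. zetaE_Euler w q) has_vector_derivative (- w * zetaE_Euler (w + 1) q)) (at q)"
proof -
  define K where "K = nat \<lceil>2 - Re w\<rceil>"
  have K: "2 \<le> Re w + real K" unfolding K_def by linarith
  have "((\<lambda>q. Euler_sum K w q) has_vector_derivative
      (\<Sum>j<K. - w * diff_inv_powr j (w + 1) q / 2 ^ Suc j) + - w * alt_diff_sum K (w + 1) q / 2 ^ K) (at q)"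
    unfolding Euler_sum_def
    by (intro has_vector_derivative_add has_vector_derivative_sum has_vector_derivative_divide
        has_vector_derivative_diff_inv_powr[where c = 0, unfolded add_0_left] has_vector_derivative_alt_diff_sum assms K)
  moreover have "(\<Sum>j<K. - w * diff_inv_powr j (w + 1) q / 2 ^ Suc j) + - w * alt_diff_sum K (w + 1) q / 2 ^ K
      = - w * Euler_sum K (w + 1) q"
    by (simp add: Euler_sum_def distrib_left sum_distrib_left)
  moreover have "zetaE_Euler (w + 1) q = Euler_sum K (w + 1) q"
    using assms K by (intro zetaE_Euler_eq_Euler_sum) auto
  ultimately show ?thesis by (simp add: zetaE_Euler_def K_def)
qed

section \<open>Derivatives of \<open>\<zeta>\<^sub>E\<close>\<close>

lemma zetaE_eq_zetaE_Euler:
  assumes "q > 0"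
  shows "zetaE w q = zetaE_Euler w q"
proof -
  define P where "P f \<longleftrightarrow> f holomorphic_on UNIV \<and>
      (\<forall>w. 0 < Re w \<longrightarrow> (\<lambda>n. (-1) ^ n / (of_nat n + complex_of_real q) powr w) sums f w)" for f
  have series: "(\<lambda>n. (-1) ^ n / (of_nat n + complex_of_real q) powr w) sums zetaE_Euler w q" if "0 < Re w" for w
  proof -
    have "(-1) ^ n / (of_nat n + complex_of_real q) powr w = (-1) ^ n * inv_powr w (real n + q)" for n
      using assms by (simp add: inv_powr_of_real_powr)
    then show ?thesis using sums_zetaE_Euler[OF assms that] by simp
  qed
  have "P (\<lambda>w. zetaE_Euler w q)"
    unfolding P_def using holomorphic_zetaE_Euler[OF assms] series by blast
  moreover have "f = (\<lambda>w. zetaE_Euler w q)" if "P f" for f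
  proof
    fix z
    show "f z = zetaE_Euler z q"
    proof (rule analytic_continuation_open[of "{w. 0 < Re w}" UNIV f "\<lambda>w. zetaE_Euler w q"])
      show "f holomorphic_on UNIV" using that by (simp add: P_def)
      show "(\<lambda>w. zetaE_Euler w q) holomorphic_on UNIV" by (rule holomorphic_zetaE_Euler[OF assms])
      show "f w = zetaE_Euler w q" if "w \<in> {w. 0 < Re w}" for w
        using \<open>P f\<close> that series[of w] by (auto simp: P_def intro: sums_unique2)
    qed (auto simp: open_halfspace_Re_gt intro: exI[of _ 1])
  qed
  ultimately have "(THE f. P f) = (\<lambda>w. zetaE_Euler w q)"
    by (rule the_equality)
  then show ?thesis unfolding zetaE_def P_def by simp
qed

lemma holomorphic_zetaE [holomorphic_intros]:
  assumes "q > 0" "f holomorphic_on A"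
  shows "(\<lambda>w. zetaE (f w) q) holomorphic_on A"
proof -
  have "(\<lambda>w. zetaE w q) holomorphic_on UNIV"
    using holomorphic_zetaE_Euler[OF assms(1)] by (simp add: zetaE_eq_zetaE_Euler[OF assms(1)])
  from holomorphic_on_compose[OF assms(2) holomorphic_on_subset[OF this]] show ?thesis
    by (simp add: o_def)
qed

lemma has_vector_derivative_zetaE:
  assumes "q > 0"
  shows "((\<lambda>q. zetaE w q) has_vector_derivative (- w * zetaE (w + 1) q)) (at q)"
proof -
  have "((\<lambda>q. zetaE w q) has_vector_derivative (- w * zetaE_Euler (w + 1) q)) (at q)"
    by (rule has_vector_derivative_transform_within_open[OF has_vector_derivative_zetaE_Euler, of q "{0<..}"])
       (use assms zetaE_eq_zetaE_Euler in auto)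
  then show ?thesis using zetaE_eq_zetaE_Euler[OF assms] by simp
qed

lemma continuous_on_zetaE: "continuous_on (UNIV \<times> {0<..}) (\<lambda>p. zetaE (fst p) (snd p))"
proof -
  have "continuous_on (UNIV \<times> {0<..}) (\<lambda>p. zetaE (fst p) (snd p)) \<longleftrightarrow>
      continuous_on (UNIV \<times> {0<..}) (\<lambda>p. zetaE_Euler (fst p) (snd p))"
    by (rule continuous_on_cong[OF refl]) (auto simp: zetaE_eq_zetaE_Euler)
  then show ?thesis using continuous_on_zetaE_Euler by simp
qed

lemma mod_stieltjes_eq_higher_deriv:
  assumes "q > 0"
  shows "mod_stieltjes k q = (-1) ^ k * (deriv ^^ k) (\<lambda>w. zetaE w q) 1"
proof -
  define c where "c j = (-1) ^ j * (deriv ^^ j) (\<lambda>w. zetaE w q) 1" for j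
  define Q where "Q c' \<longleftrightarrow> (\<forall>z. (\<lambda>j. (-1) ^ j * c' j / fact j * (z - 1) ^ j) sums zetaE z q)" for c'
  have sign: "(-1) ^ j * ((-1) ^ j * x) = x" for j and x :: complex
    by (simp flip: mult.assoc power_mult_distrib)
  have "Q c"
    unfolding Q_def c_def sign
  proof
    fix z :: complex
    show "(\<lambda>j. (deriv ^^ j) (\<lambda>w. zetaE w q) 1 / fact j * (z - 1) ^ j) sums zetaE z q"
      by (rule holomorphic_power_series[of _ 1 "norm (z - 1) + 1"])
         (use holomorphic_zetaE[OF assms holomorphic_on_ident] in \<open>auto intro: holomorphic_on_subset simp: dist_norm norm_minus_commute\<close>)
  qed
  moreover have "c' = c" if "Q c'" for c'
  proof
    fix j
    have "(-1) ^ j * c' j / fact j = (deriv ^^ j) (\<lambda>w. zetaE w q) 1 / fact j"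
      by (rule power_series_coeff_eq_higher_deriv[where f = "\<lambda>z. zetaE z q"]) (use that in \<open>simp add: Q_def\<close>)
    then have "(-1) ^ j * ((-1) ^ j * c' j) = (-1) ^ j * (deriv ^^ j) (\<lambda>w. zetaE w q) 1"
      by (simp add: field_simps)
    then show "c' j = c j" unfolding c_def sign .
  qed
  ultimately have "(THE c. Q c) = c" by (rule the_equality)
  then show ?thesis unfolding mod_stieltjes_def Q_def c_def by simp
qed

lemma higher_deriv_zetaE_shift:
  "(deriv ^^ k) (\<lambda>w. zetaE (w + of_nat n) q) 1 = zetaE_deriv k (of_nat (n + 1)) q"
proof -
  have "(deriv ^^ k) (\<lambda>w. zetaE (w + of_nat n) q) 1 = (deriv ^^ k) ((\<lambda>w. zetaE (w + of_nat n) q) \<circ> (\<lambda>x. 1 + x)) 0"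
    by (rule higher_deriv_shift_0)
  also have "(\<lambda>w. zetaE (w + of_nat n) q) \<circ> (\<lambda>x. 1 + x) = (\<lambda>w. zetaE w q) \<circ> (\<lambda>x. of_nat (n + 1) + x)"
    by (simp add: o_def add_ac)
  also have "(deriv ^^ k) \<dots> 0 = zetaE_deriv k (of_nat (n + 1)) q"
    unfolding zetaE_deriv_def by (rule higher_deriv_shift_0[symmetric])
  finally show ?thesis .
qed

lemma vector_derivative_higher_deriv_zetaE:
  assumes "p holomorphic_on UNIV" "q > 0"
  shows "vector_derivative (\<lambda>q. (deriv ^^ l) (\<lambda>w. p w * zetaE (w + c) q) z) (at q) =
    (deriv ^^ l) (\<lambda>w. p w * - (w + c) * zetaE (w + c + 1) q) z"
proof (rule vector_derivative_at, rule has_vector_derivative_higher_deriv_parametric[of "{0<..}"])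
  fix w :: complex and q :: real assume "q \<in> {0<..}"
  then have "((\<lambda>q. zetaE (w + c) q) has_vector_derivative - (w + c) * zetaE (w + c + 1) q) (at q)"
    by (intro has_vector_derivative_zetaE) simp
  from has_vector_derivative_mult_right[OF this, of "p w"]
  show "((\<lambda>q. p w * zetaE (w + c) q) has_vector_derivative p w * - (w + c) * zetaE (w + c + 1) q) (at q)"
    by (simp add: mult.assoc)
next
  have "continuous_on (UNIV \<times> {0<..}) (\<lambda>x. zetaE (fst (fst x + c + 1, snd x)) (snd (fst x + c + 1, snd x)))"
    by (rule continuous_on_compose2[OF continuous_on_zetaE]) (auto intro!: continuous_intros)
  moreover have "continuous_on (UNIV \<times> {0::real<..}) (\<lambda>x. p (fst x) * - (fst x + c))"
    by (intro continuous_intros continuous_on_compose2[OF holomorphic_on_imp_continuous_on[OF assms(1)]]) auto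
  ultimately show "continuous_on (UNIV \<times> {0<..}) (\<lambda>x. p (fst x) * - (fst x + c) * zetaE (fst x + c + 1) (snd x))"
    using continuous_on_mult by fastforce
next
  fix q :: real assume "q \<in> {0<..}"
  then show "(\<lambda>w. p w * zetaE (w + c) q) holomorphic_on UNIV"
    and "(\<lambda>w. p w * - (w + c) * zetaE (w + c + 1) q) holomorphic_on UNIV"
    using assms(1) by (auto intro!: holomorphic_intros)
qed (use assms in auto)

lemma higher_vderiv_higher_deriv_zetaE:
  assumes "p holomorphic_on UNIV" "q > 0"
  shows "higher_vderiv n (\<lambda>q. (deriv ^^ l) (\<lambda>w. p w * zetaE (w + c) q) z) q =
    (deriv ^^ l) (\<lambda>w. p w * (\<Prod>i<n. - (w + c + of_nat i)) * zetaE (w + c + of_nat n) q) z"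
  using assms
proof (induction n arbitrary: p c)
  case (Suc n)
  define p' where "p' w = p w * - (w + c)" for w
  have "p' holomorphic_on UNIV"
    unfolding p'_def using Suc.prems(1) by (intro holomorphic_intros)
  have "vector_derivative (\<lambda>q. (deriv ^^ l) (\<lambda>w. p w * zetaE (w + c) q) z) (at x) =
      (deriv ^^ l) (\<lambda>w. p' w * zetaE (w + (c + 1)) x) z" if "x \<in> {0<..}" for x
    using vector_derivative_higher_deriv_zetaE[OF Suc.prems(1), of x l c z] that
    by (simp add: p'_def add.assoc)
  then have "higher_vderiv (Suc n) (\<lambda>q. (deriv ^^ l) (\<lambda>w. p w * zetaE (w + c) q) z) q =
      higher_vderiv n (\<lambda>q. (deriv ^^ l) (\<lambda>w. p' w * zetaE (w + (c + 1)) q) z) q"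
    unfolding higher_vderiv_Suc using Suc.prems(2) by (intro higher_vderiv_cong_open[of "{0<..}"]) auto
  also have "\<dots> = (deriv ^^ l) (\<lambda>w. p' w * (\<Prod>i<n. - (w + (c + 1) + of_nat i)) * zetaE (w + (c + 1) + of_nat n) q) z"
    by (rule Suc.IH[OF \<open>p' holomorphic_on UNIV\<close> Suc.prems(2)])
  also have "(\<lambda>w. p' w * (\<Prod>i<n. - (w + (c + 1) + of_nat i)) * zetaE (w + (c + 1) + of_nat n) q) =
      (\<lambda>w. p w * (\<Prod>i<Suc n. - (w + c + of_nat i)) * zetaE (w + c + of_nat (Suc n)) q)"
    by (simp only: prod.lessThan_Suc_shift) (simp add: p'_def mult_ac add_ac)
  finally show ?case .
qed simp

theorem theorem3p15:
  fixes q :: real and l n :: nat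
  assumes "q > 0" and "n \<ge> 1"
  shows "higher_vderiv n (mod_stieltjes l) q =
    (-1) ^ l * (\<Sum>k\<le>l. (-1) ^ k * fact k * of_nat (l choose k)
       * of_int (stirling1_signed (n + 1) (k + 1))
       * zetaE_deriv (l - k) (of_nat (n + 1)) q)"
proof -
  have "mod_stieltjes l x = (deriv ^^ l) (\<lambda>w. (-1) ^ l * zetaE (w + 0) x) 1" if "x \<in> {0<..}" for x
    using that mod_stieltjes_eq_higher_deriv[of x l]
    by (simp add: higher_deriv_cmult[where A = UNIV] holomorphic_zetaE holomorphic_on_ident)
  then have "higher_vderiv n (mod_stieltjes l) q =
      higher_vderiv n (\<lambda>x. (deriv ^^ l) (\<lambda>w. (-1) ^ l * zetaE (w + 0) x) 1) q"
    using assms(1) by (intro higher_vderiv_cong_open[of "{0<..}"]) auto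
  also have "\<dots> = (deriv ^^ l) (\<lambda>w. (-1) ^ l * (\<Prod>j<n. - (w + of_nat j)) * zetaE (w + of_nat n) q) 1"
    using higher_vderiv_higher_deriv_zetaE[of "\<lambda>_. (-1) ^ l" q n l 0 1] assms(1) by simp
  also have "\<dots> = (-1) ^ l * (\<Sum>k\<le>l. of_nat (l choose k) * (deriv ^^ k) (\<lambda>w. \<Prod>j<n. - (w + of_nat j)) 1
      * (deriv ^^ (l - k)) (\<lambda>w. zetaE (w + of_nat n) q) 1)"
    using assms(1)
    by (simp add: mult.assoc higher_deriv_cmult[where A = UNIV] higher_deriv_mult[where S = UNIV]
        atMost_atLeast0 holomorphic_intros)
  also have "\<dots> = (-1) ^ l * (\<Sum>k\<le>l. (-1) ^ k * fact k * of_nat (l choose k)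
      * of_int (stirling1_signed (n + 1) (k + 1)) * zetaE_deriv (l - k) (of_nat (n + 1)) q)"
    by (simp only: higher_deriv_prod_neg_at_1 higher_deriv_zetaE_shift) (simp add: mult_ac del: stirling.simps)
  finally show ?thesis .
qed

end
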